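(* Let $\omega(y)=\sum_{k\ge0}a_ky^k$ ($a_k\ge 0$, radius of convergence $R>0$) and let $V$ be the covariance of the power series distribution of $\omega$. Then for every $n\in\mathbb{N}$ and every constant $C>0$, the function $x\mapsto n^2V(x/n)$ is the covariance of the power series distribution of the function $C\omega(y^n)$.
   Context: For a power series $\omega$ with non-negative coefficients and radius of convergence $R>0$, the power series distribution (PSD) of $\omega$ with parameter $y\in(0,R)$ is the law on $\{0,1,2,\dots\}$ given by $P\{\xi=k\}=a_ky^k/\omega(y)$. Its mean is $x(y)=y\omega'(y)/\omega(y)$ and its variance is $y\,x'(y)>0$ (nondegenerate case), so $x(\cdot)$ has an inverse $y=f(x)$ on its range. The covariance of the PSD of $\omega$ is the function $V(x)=f(x)/f'(x)$, i.e. the variance expressed as a function of the mean $x$. *)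

theory Defs
  imports "HOL-Analysis.Analysis"
begin

definition pseries :: "(nat \<Rightarrow> real) \<Rightarrow> real \<Rightarrow> real" where
  "pseries a y = (\<Sum>k. a k * y ^ k)"

definition psd_params :: "(nat \<Rightarrow> real) \<Rightarrow> real set" where
  "psd_params a = {y. 0 < y \<and> ereal y < conv_radius a}"

definition psd_mean :: "(nat \<Rightarrow> real) \<Rightarrow> real \<Rightarrow> real" where
  "psd_mean a y = y * deriv (pseries a) y / pseries a y"

definition psd_mean_range :: "(nat \<Rightarrow> real) \<Rightarrow> real set" where
  "psd_mean_range a = psd_mean a ` psd_params a"

definition psd_inv_mean :: "(nat \<Rightarrow> real) \<Rightarrow> real \<Rightarrow> real" where
  "psd_inv_mean a = the_inv_into (psd_params a) (psd_mean a)"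

definition psd_covariance :: "(nat \<Rightarrow> real) \<Rightarrow> real \<Rightarrow> real" where
  "psd_covariance a x = psd_inv_mean a x / deriv (psd_inv_mean a) x"

end

(*
  If xi has the power series distribution of omega with parameter y^n, then n xi has the power
  series distribution of C omega(y^n) with parameter y; the factor C cancels.  So the moments
  transform as E (n xi)^j = n^j E xi^j: the mean map becomes y |-> n x(y^n) and the variance is
  multiplied by n^2.  On the other hand, the covariance evaluated at the mean x(y) is the
  variance: x'(y) = Var/y > 0, and the inverse function theorem gives f'(x(y)) = y / Var.
*)

theory Submission
  imports Defs "HOL-Complex_Analysis.Conformal_Mappings"
begin

lemma pseries_sums:
  assumes "ereal \<bar>y\<bar> < conv_radius c"
  shows "(\<lambda>k. c k * y ^ k) sums pseries c y"
  unfolding pseries_def using assms by (intro summable_sums summable_in_conv_radius) simp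

lemma conv_radius_le_conv_radius_of_nat_mult:
  fixes c :: "nat \<Rightarrow> real"
  shows "conv_radius c \<le> conv_radius (\<lambda>k. real k * c k)"
proof -
  have "conv_radius c = fps_conv_radius (Abs_fps c)"
    by (simp add: fps_conv_radius_def)
  also have "\<dots> \<le> fps_conv_radius (fps_deriv (Abs_fps c))"
    by (rule fps_conv_radius_deriv)
  also have "\<dots> = conv_radius (\<lambda>k. real (k + 1) * c (k + 1))"
    by (simp add: fps_conv_radius_def)
  also have "\<dots> = conv_radius (\<lambda>k. real k * c k)"
    by (rule conv_radius_shift)
  finally show ?thesis .
qed

lemma conv_radius_le_conv_radius_of_nat_power_mult:
  fixes c :: "nat \<Rightarrow> real"
  shows "conv_radius c \<le> conv_radius (\<lambda>k. real k ^ j * c k)"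
proof (induction j)
  case (Suc j)
  with conv_radius_le_conv_radius_of_nat_mult[of "\<lambda>k. real k ^ j * c k"] show ?case
    by (simp add: mult.assoc)
qed simp

lemma has_real_derivative_pseries:
  fixes c :: "nat \<Rightarrow> real"
  assumes y: "ereal \<bar>y\<bar> < conv_radius c" and "y \<noteq> 0"
  shows "(pseries c has_real_derivative pseries (\<lambda>k. real k * c k) y / y) (at y)"
proof -
  have "(\<lambda>k. real k * c k * y ^ k) sums pseries (\<lambda>k. real k * c k) y"
    using y conv_radius_le_conv_radius_of_nat_mult[of c] by (intro pseries_sums) simp
  then have "(\<lambda>k. real (Suc k) * c (Suc k) * y ^ Suc k) sums pseries (\<lambda>k. real k * c k) y"
    using sums_Suc_iff[of "\<lambda>k. real k * c k * y ^ k"] by simp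
  then have "(\<lambda>k. y * (diffs c k * y ^ k)) sums pseries (\<lambda>k. real k * c k) y"
    by (simp add: diffs_def algebra_simps)
  from sums_divide[OF this, of y] \<open>y \<noteq> 0\<close>
  have "(\<lambda>k. diffs c k * y ^ k) sums (pseries (\<lambda>k. real k * c k) y / y)"
    by simp
  moreover have "(pseries c has_real_derivative (\<Sum>k. diffs c k * y ^ k)) (at y)"
    unfolding pseries_def[abs_def] using y by (intro has_field_derivative_powser) simp
  ultimately show ?thesis
    by (simp add: sums_iff)
qed

lemma open_psd_params: "open (psd_params c)"
proof -
  have "psd_params c = {0<..} \<inter> {y. ereal y < conv_radius c}"
    by (auto simp: psd_params_def)
  moreover have "open {y. ereal y < conv_radius c}"
    using open_Collect_less[of ereal "\<lambda>_. conv_radius c"]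
    by (simp add: continuous_on_ereal continuous_on_id)
  ultimately show ?thesis
    by (simp add: open_Int)
qed

lemma psd_params_conv_radius:
  assumes "y \<in> psd_params c"
  shows "ereal \<bar>y\<bar> < conv_radius c" "ereal \<bar>y\<bar> < conv_radius (\<lambda>k. real k ^ j * c k)"
  using assms conv_radius_le_conv_radius_of_nat_power_mult[of c j]
  by (auto simp: psd_params_def)

lemma atLeastAtMost_subset_psd_params:
  assumes "y1 \<in> psd_params c" "y2 \<in> psd_params c"
  shows "{y1..y2} \<subseteq> psd_params c"
  using assms by (auto simp: psd_params_def intro: le_less_trans[of _ "ereal y2"])

definition psd_moment :: "nat \<Rightarrow> (nat \<Rightarrow> real) \<Rightarrow> real \<Rightarrow> real" where
  "psd_moment j c y = pseries (\<lambda>k. real k ^ j * c k) y / pseries c y"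

definition psd_variance :: "(nat \<Rightarrow> real) \<Rightarrow> real \<Rightarrow> real" where
  "psd_variance c y = psd_moment 2 c y - (psd_moment 1 c y)\<^sup>2"

lemma psd_mean_eq_moment:
  assumes "y \<in> psd_params c"
  shows "psd_mean c y = psd_moment 1 c y"
proof -
  have "y > 0"
    using assms by (simp add: psd_params_def)
  moreover have "deriv (pseries c) y = pseries (\<lambda>k. real k * c k) y / y"
    using psd_params_conv_radius[OF assms] \<open>y > 0\<close>
    by (intro DERIV_imp_deriv has_real_derivative_pseries) auto
  ultimately show ?thesis
    by (simp add: psd_mean_def psd_moment_def)
qed

lemma psd_mean_has_real_derivative:
  assumes y: "y \<in> psd_params c" and nonzero: "pseries c y \<noteq> 0"
  shows "(psd_mean c has_real_derivative psd_variance c y / y) (at y)"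
proof -
  define S0 S1 S2 where "S0 = pseries c y" and "S1 = pseries (\<lambda>k. real k * c k) y"
    and "S2 = pseries (\<lambda>k. real k * (real k * c k)) y"
  have "y > 0"
    using y by (simp add: psd_params_def)
  note radius = psd_params_conv_radius(1)[OF y]
    psd_params_conv_radius(2)[OF y, of 1] psd_params_conv_radius(2)[OF y, of 2]
  have "(pseries c has_real_derivative S1 / y) (at y)"
    unfolding S1_def using radius \<open>y > 0\<close> by (intro has_real_derivative_pseries) auto
  moreover have "(pseries (\<lambda>k. real k * c k) has_real_derivative S2 / y) (at y)"
    unfolding S2_def using radius \<open>y > 0\<close>
    by (intro has_real_derivative_pseries) (auto simp: power2_eq_square mult.assoc)
  ultimately have "((\<lambda>z. pseries (\<lambda>k. real k * c k) z / pseries c z) has_real_derivative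
      (S2 / y * S0 - S1 * (S1 / y)) / (S0 * S0)) (at y)"
    using DERIV_divide nonzero unfolding S0_def S1_def by blast
  moreover have "(S2 / y * S0 - S1 * (S1 / y)) / (S0 * S0) = psd_variance c y / y"
  proof -
    have "(S2 / y * S0 - S1 * (S1 / y)) / (S0 * S0) = (S2 / S0 - (S1 / S0)\<^sup>2) / y"
      using nonzero \<open>y > 0\<close> unfolding S0_def[symmetric]
      by (simp add: field_simps power2_eq_square)
    also have "\<dots> = psd_variance c y / y"
      by (simp add: psd_variance_def psd_moment_def S0_def S1_def S2_def
          power2_eq_square mult.assoc)
    finally show ?thesis .
  qed
  ultimately have "((\<lambda>z. psd_moment 1 c z) has_real_derivative psd_variance c y / y) (at y)"
    by (simp add: psd_moment_def)
  then show ?thesis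
    by (rule has_field_derivative_transform_within_open[OF _ open_psd_params y])
       (simp add: psd_mean_eq_moment)
qed

definition power_subst_coeffs :: "nat \<Rightarrow> real \<Rightarrow> (nat \<Rightarrow> real) \<Rightarrow> nat \<Rightarrow> real" where
  "power_subst_coeffs n C d k = (if n dvd k then C * d (k div n) else 0)"

lemma sums_power_subst_coeffs_iff:
  assumes "n \<ge> 1"
  shows "(\<lambda>k. power_subst_coeffs n C d k * y ^ k) sums s \<longleftrightarrow> (\<lambda>j. C * d j * (y ^ n) ^ j) sums s"
proof -
  have "strict_mono (\<lambda>j. n * j)"
    using assms by (auto simp: strict_mono_def)
  then have "(\<lambda>j. power_subst_coeffs n C d (n * j) * y ^ (n * j)) sums s
      \<longleftrightarrow> (\<lambda>k. power_subst_coeffs n C d k * y ^ k) sums s"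
    by (rule sums_mono_reindex) (auto simp: power_subst_coeffs_def)
  then show ?thesis
    using assms by (simp add: power_subst_coeffs_def power_mult)
qed

lemma summable_power_subst_coeffs_iff:
  assumes "n \<ge> 1" "C \<noteq> 0"
  shows "summable (\<lambda>k. power_subst_coeffs n C d k * y ^ k) \<longleftrightarrow> summable (\<lambda>j. d j * (y ^ n) ^ j)"
proof -
  have "summable (\<lambda>k. power_subst_coeffs n C d k * y ^ k) \<longleftrightarrow> summable (\<lambda>j. C * (d j * (y ^ n) ^ j))"
    unfolding summable_def sums_power_subst_coeffs_iff[OF assms(1)] by (simp add: mult.assoc)
  with \<open>C \<noteq> 0\<close> show ?thesis
    by (simp add: summable_cmult_iff)
qed

lemma pseries_power_subst_coeffs:
  assumes "n \<ge> 1"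
  shows "pseries (power_subst_coeffs n C d) y = pseries (\<lambda>j. C * d j) (y ^ n)"
  unfolding pseries_def suminf_def sums_power_subst_coeffs_iff[OF assms] ..

lemma pseries_cmult:
  assumes "ereal \<bar>z\<bar> < conv_radius d"
  shows "pseries (\<lambda>j. C * d j) z = C * pseries d z"
  using suminf_mult[OF sums_summable[OF pseries_sums[OF assms]], of C]
  by (simp add: pseries_def mult.assoc)

lemma conv_radius_power_subst_coeffs_less_iff:
  assumes n: "n \<ge> 1" and "C \<noteq> 0" "y \<ge> 0"
  shows "ereal y < conv_radius (power_subst_coeffs n C d) \<longleftrightarrow> ereal (y ^ n) < conv_radius d"
proof
  assume "ereal y < conv_radius (power_subst_coeffs n C d)"
  then obtain r where r: "y < r" "ereal r < conv_radius (power_subst_coeffs n C d)"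
    using ereal_dense2 by fastforce
  then have "summable (\<lambda>k. power_subst_coeffs n C d k * r ^ k)"
    using \<open>y \<ge> 0\<close> by (intro summable_in_conv_radius) simp
  then have "ereal (r ^ n) \<le> conv_radius d"
    using conv_radius_geI[of d "r ^ n"] r \<open>y \<ge> 0\<close>
    by (simp add: summable_power_subst_coeffs_iff[OF n \<open>C \<noteq> 0\<close>])
  moreover have "ereal (y ^ n) < ereal (r ^ n)"
    using r \<open>y \<ge> 0\<close> n by (simp add: power_strict_mono)
  ultimately show "ereal (y ^ n) < conv_radius d"
    by (rule less_le_trans[rotated])
next
  assume "ereal (y ^ n) < conv_radius d"
  then obtain t where t: "y ^ n < t" "ereal t < conv_radius d"
    using ereal_dense2 by fastforce
  define r where "r = root n t"
  have "t > 0"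
    using t \<open>y \<ge> 0\<close> by (meson le_less_trans zero_le_power)
  then have "r > 0" "r ^ n = t"
    using n by (simp_all add: r_def real_root_pow_pos2)
  have "summable (\<lambda>j. d j * t ^ j)"
    using t \<open>t > 0\<close> by (intro summable_in_conv_radius) simp
  then have "ereal r \<le> conv_radius (power_subst_coeffs n C d)"
    using conv_radius_geI[of "power_subst_coeffs n C d" r] \<open>r > 0\<close> \<open>r ^ n = t\<close>
    by (simp add: summable_power_subst_coeffs_iff[OF n \<open>C \<noteq> 0\<close>])
  moreover have "ereal y < ereal r"
    using t \<open>r > 0\<close> \<open>r ^ n = t\<close> power_less_imp_less_base[of y n r] by simp
  ultimately show "ereal y < conv_radius (power_subst_coeffs n C d)"
    by (rule less_le_trans[rotated])
qed

lemma psd_params_power_subst_coeffs: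
  assumes "n \<ge> 1" "C \<noteq> 0"
  shows "psd_params (power_subst_coeffs n C d) = {y. y > 0 \<and> y ^ n \<in> psd_params d}"
  using conv_radius_power_subst_coeffs_less_iff[OF assms] by (auto simp: psd_params_def)

lemma of_nat_power_mult_power_subst_coeffs:
  "real k ^ j * power_subst_coeffs n C d k
    = power_subst_coeffs n C (\<lambda>i. real n ^ j * (real i ^ j * d i)) k"
  by (auto simp: power_subst_coeffs_def power_mult_distrib elim!: dvdE)

lemma psd_moment_power_subst_coeffs:
  assumes n: "n \<ge> 1" and "C \<noteq> 0" and "y ^ n \<in> psd_params d"
  shows "psd_moment j (power_subst_coeffs n C d) y = real n ^ j * psd_moment j d (y ^ n)"
proof -
  note radius = psd_params_conv_radius[OF \<open>y ^ n \<in> psd_params d\<close>]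
  have "pseries (\<lambda>i. C * (real n ^ j * (real i ^ j * d i))) (y ^ n)
      = C * real n ^ j * pseries (\<lambda>i. real i ^ j * d i) (y ^ n)"
    using pseries_cmult[OF radius(2), of "C * real n ^ j"] by (simp add: mult.assoc)
  with pseries_cmult[OF radius(1), of C] \<open>C \<noteq> 0\<close> show ?thesis
    unfolding psd_moment_def of_nat_power_mult_power_subst_coeffs
    by (simp add: pseries_power_subst_coeffs[OF n])
qed

lemma psd_mean_power_subst_coeffs:
  assumes "n \<ge> 1" "C \<noteq> 0" "y \<in> psd_params (power_subst_coeffs n C d)"
  shows "psd_mean (power_subst_coeffs n C d) y = real n * psd_mean d (y ^ n)"
  using assms psd_moment_power_subst_coeffs[of n C y d 1]
  by (simp add: psd_mean_eq_moment psd_params_power_subst_coeffs)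

lemma psd_variance_power_subst_coeffs:
  assumes "n \<ge> 1" "C \<noteq> 0" "y \<in> psd_params (power_subst_coeffs n C d)"
  shows "psd_variance (power_subst_coeffs n C d) y = (real n)\<^sup>2 * psd_variance d (y ^ n)"
  using assms psd_moment_power_subst_coeffs[of n C y d]
  by (simp add: psd_variance_def psd_params_power_subst_coeffs power_mult_distrib algebra_simps)

lemma power_image_psd_params_power_subst_coeffs:
  assumes n: "n \<ge> 1" and "C \<noteq> 0"
  shows "(\<lambda>y. y ^ n) ` psd_params (power_subst_coeffs n C d) = psd_params d"
proof -
  have "z = root n z ^ n \<and> root n z \<in> psd_params (power_subst_coeffs n C d)"
    if "z \<in> psd_params d" for z
  proof -
    have "z > 0"
      using that by (simp add: psd_params_def)
    with that n show ?thesis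
      by (simp add: psd_params_power_subst_coeffs[OF assms] real_root_pow_pos2)
  qed
  then show ?thesis
    by (auto simp: psd_params_power_subst_coeffs[OF assms] image_iff)
qed

lemma psd_mean_range_power_subst_coeffs:
  assumes "n \<ge> 1" "C \<noteq> 0"
  shows "psd_mean_range (power_subst_coeffs n C d) = (\<lambda>x. real n * x) ` psd_mean_range d"
proof -
  have "psd_mean_range (power_subst_coeffs n C d)
      = (\<lambda>y. real n * psd_mean d (y ^ n)) ` psd_params (power_subst_coeffs n C d)"
    unfolding psd_mean_range_def using psd_mean_power_subst_coeffs[OF assms] by simp
  also have "\<dots> = (\<lambda>x. real n * x) ` psd_mean d `
      (\<lambda>y. y ^ n) ` psd_params (power_subst_coeffs n C d)"
    by (simp add: image_image)
  finally show ?thesis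
    by (simp add: power_image_psd_params_power_subst_coeffs[OF assms] psd_mean_range_def)
qed

locale power_series_distribution =
  fixes c :: "nat \<Rightarrow> real"
  assumes coeff_nonneg: "\<And>k. c k \<ge> 0"
    and nondegenerate: "\<exists>i j. i \<noteq> j \<and> c i > 0 \<and> c j > 0"
begin

lemma pseries_pos:
  assumes y: "y \<in> psd_params c"
  shows "pseries c y > 0"
proof -
  obtain i where "c i > 0"
    using nondegenerate by blast
  moreover have "y > 0"
    using y by (simp add: psd_params_def)
  ultimately show ?thesis
    using pseries_sums[OF psd_params_conv_radius(1)[OF y]] coeff_nonneg
    unfolding pseries_def by (intro suminf_pos2[of _ i]) (auto simp: sums_iff)
qed

lemma psd_variance_pos:
  assumes y: "y \<in> psd_params c"
  shows "psd_variance c y > 0"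
proof -
  define m where "m = psd_moment 1 c y"
  define S0 where "S0 = pseries c y"
  have "y > 0" and "S0 > 0"
    using y pseries_pos[OF y] by (simp_all add: psd_params_def S0_def)
  have "(\<lambda>k. real k ^ j * c k * y ^ k) sums (S0 * psd_moment j c y)" for j
    using pseries_sums[OF psd_params_conv_radius(2)[OF y]] \<open>S0 > 0\<close>
    by (simp add: psd_moment_def S0_def)
  moreover have "(\<lambda>k. c k * y ^ k) sums S0"
    unfolding S0_def by (rule pseries_sums[OF psd_params_conv_radius(1)[OF y]])
  ultimately have "(\<lambda>k. real k ^ 2 * c k * y ^ k - 2 * m * (real k ^ 1 * c k * y ^ k)
      + m\<^sup>2 * (c k * y ^ k))
    sums (S0 * psd_moment 2 c y - 2 * m * (S0 * psd_moment 1 c y) + m\<^sup>2 * S0)"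
    by (intro sums_add sums_diff sums_mult)
  then have deviations: "(\<lambda>k. c k * y ^ k * (real k - m)\<^sup>2) sums (S0 * psd_variance c y)"
    by (simp add: psd_variance_def m_def power2_eq_square algebra_simps)
  obtain l where "c l > 0" "real l \<noteq> m"
    using nondegenerate by (metis of_nat_eq_iff)
  then have "0 < (\<Sum>k. c k * y ^ k * (real k - m)\<^sup>2)"
    using deviations coeff_nonneg \<open>y > 0\<close>
    by (intro suminf_pos2[of _ l]) (auto simp: sums_iff)
  then have "S0 * psd_variance c y > 0"
    using deviations by (simp add: sums_iff)
  with \<open>S0 > 0\<close> show ?thesis
    by (simp add: zero_less_mult_iff)
qed

lemma psd_mean_has_pos_derivative:
  assumes "y \<in> psd_params c"
  shows "(psd_mean c has_real_derivative psd_variance c y / y) (at y)"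
    and "psd_variance c y / y > 0"
proof -
  show "(psd_mean c has_real_derivative psd_variance c y / y) (at y)"
    using pseries_pos[OF assms] by (intro psd_mean_has_real_derivative[OF assms]) simp
  show "psd_variance c y / y > 0"
    using psd_variance_pos[OF assms] assms by (simp add: psd_params_def)
qed

lemma psd_mean_strict_mono: "strict_mono_on (psd_params c) (psd_mean c)"
proof (rule strict_mono_onI)
  fix y1 y2
  assume y1: "y1 \<in> psd_params c" and y2: "y2 \<in> psd_params c" and "y1 < y2"
  have "\<exists>D. (psd_mean c has_real_derivative D) (at y) \<and> D > 0" if "y1 \<le> y" "y \<le> y2" for y
  proof -
    have "y \<in> psd_params c"
      using atLeastAtMost_subset_psd_params[OF y1 y2] that by auto
    then show ?thesis
      using psd_mean_has_pos_derivative by blast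
  qed
  from DERIV_pos_imp_increasing[OF \<open>y1 < y2\<close> this]
  show "psd_mean c y1 < psd_mean c y2" .
qed

lemma psd_inv_mean_psd_mean:
  assumes "y \<in> psd_params c"
  shows "psd_inv_mean c (psd_mean c y) = y"
  unfolding psd_inv_mean_def
  using strict_mono_on_imp_inj_on[OF psd_mean_strict_mono] assms by (rule the_inv_into_f_f)

lemma psd_covariance_psd_mean:
  assumes y: "y \<in> psd_params c"
  shows "psd_covariance c (psd_mean c y) = psd_variance c y"
proof -
  have "continuous_on (psd_params c) (psd_mean c)"
    using psd_mean_has_pos_derivative(1)
    by (intro continuous_at_imp_continuous_on) (blast intro: DERIV_isCont)
  with psd_mean_has_pos_derivative[OF y]
  have "(psd_inv_mean c has_real_derivative inverse (psd_variance c y / y)) (at (psd_mean c y))"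
    by (intro has_field_derivative_inverse_strong[OF _ _ open_psd_params y])
       (auto simp: psd_inv_mean_psd_mean)
  then have "deriv (psd_inv_mean c) (psd_mean c y) = y / psd_variance c y"
    by (simp add: DERIV_imp_deriv)
  then show ?thesis
    using y psd_variance_pos[OF y]
    by (simp add: psd_covariance_def psd_inv_mean_psd_mean psd_params_def)
qed

lemma power_subst:
  assumes "n \<ge> 1" "C > 0"
  shows "power_series_distribution (power_subst_coeffs n C c)"
proof
  show "power_subst_coeffs n C c k \<ge> 0" for k
    using coeff_nonneg \<open>C > 0\<close> by (simp add: power_subst_coeffs_def)
  obtain i j where "i \<noteq> j" "c i > 0" "c j > 0"
    using nondegenerate by blast
  then have "n * i \<noteq> n * j"
      "power_subst_coeffs n C c (n * i) > 0" "power_subst_coeffs n C c (n * j) > 0"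
    using assms by (auto simp: power_subst_coeffs_def)
  then show "\<exists>i j. i \<noteq> j \<and> power_subst_coeffs n C c i > 0 \<and> power_subst_coeffs n C c j > 0"
    by blast
qed

lemma psd_covariance_power_subst_coeffs:
  assumes n: "n \<ge> 1" and "C > 0" and x: "x \<in> psd_mean_range (power_subst_coeffs n C c)"
  shows "psd_covariance (power_subst_coeffs n C c) x = (real n)\<^sup>2 * psd_covariance c (x / real n)"
proof -
  interpret subst: power_series_distribution "power_subst_coeffs n C c"
    using n \<open>C > 0\<close> by (rule power_subst)
  obtain y where y: "y \<in> psd_params (power_subst_coeffs n C c)"
    and x_eq: "x = psd_mean (power_subst_coeffs n C c) y"
    using x by (auto simp: psd_mean_range_def)
  have "y ^ n \<in> psd_params c" "x / real n = psd_mean c (y ^ n)"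
    using y n \<open>C > 0\<close>
    by (simp_all add: x_eq psd_params_power_subst_coeffs psd_mean_power_subst_coeffs)
  then show ?thesis
    using y n \<open>C > 0\<close>
    by (simp add: x_eq subst.psd_covariance_psd_mean psd_covariance_psd_mean
        psd_variance_power_subst_coeffs)
qed

end

theorem lemma4:
  fixes a :: "nat \<Rightarrow> real" and n :: nat and C :: real
  assumes nonneg: "\<And>k. a k \<ge> 0"
    and radius: "conv_radius a > 0"
    and nondeg: "\<exists>i j. i \<noteq> j \<and> a i > 0 \<and> a j > 0"
    and n: "n \<ge> 1"
    and C: "C > 0"
  defines "b \<equiv> (\<lambda>k. if n dvd k then C * a (k div n) else 0)"
  shows "(\<forall>y. ereal (\<bar>y\<bar> ^ n) < conv_radius a \<longrightarrow> pseries b y = C * pseries a (y ^ n))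
    \<and> psd_mean_range b = (\<lambda>x. real n * x) ` psd_mean_range a
    \<and> (\<forall>x \<in> psd_mean_range b. psd_covariance b x = (real n)\<^sup>2 * psd_covariance a (x / real n))"
proof -
  interpret power_series_distribution a
    using nonneg nondeg by unfold_locales
  have b: "b = power_subst_coeffs n C a"
    by (simp add: b_def power_subst_coeffs_def fun_eq_iff)
  show ?thesis
  proof (intro conjI allI impI ballI)
    show "pseries b y = C * pseries a (y ^ n)" if "ereal (\<bar>y\<bar> ^ n) < conv_radius a" for y
      using that by (simp add: b pseries_power_subst_coeffs[OF n] pseries_cmult power_abs)
    show "psd_mean_range b = (\<lambda>x. real n * x) ` psd_mean_range a"
      using n C by (simp add: b psd_mean_range_power_subst_coeffs)
    show "psd_covariance b x = (real n)\<^sup>2 * psd_covariance a (x / real n)"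
      if "x \<in> psd_mean_range b" for x
      using n C that unfolding b by (rule psd_covariance_power_subst_coeffs)
  qed
qed

end
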